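(* Let $\mathcal{A}$ be a commutative unital $C^*$-algebra and let $F\in B^a(H_{\mathcal{A}})$ be normal, i.e. $FF^*=F^*F$. If $\alpha_1,\alpha_2\in\sigma_p^{\mathcal{A}}(F)$ and $\alpha_1-\alpha_2$ is invertible in $\mathcal{A}$, then $\ker(F-\alpha_1I)\perp\ker(F-\alpha_2I)$, i.e. $\langle x_2,x_1\rangle=0$ for all $x_1\in\ker(F-\alpha_1I)$, $x_2\in\ker(F-\alpha_2I)$.
   Context: $H_{\mathcal{A}}=l_2(\mathcal{A})$ is the standard Hilbert $C^*$-module of sequences $(x_1,x_2,\dots)$ in $\mathcal{A}$ with $\sum_k x_k^*x_k$ norm-convergent, inner product $\langle x,y\rangle=\sum_k x_k^*y_k$. $B^a(H_{\mathcal{A}})$ denotes the bounded adjointable $\mathcal{A}$-linear operators on $H_{\mathcal{A}}$. For $\alpha\in\mathcal{A}$, $\alpha I$ is the operator $(x_k)\mapsto(\alpha x_k)$. $\sigma_p^{\mathcal{A}}(F)=\{\alpha\in\mathcal{A}\mid\ker(F-\alpha I)\ne\{0\}\}$. *)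

theory Defs
  imports "HOL-Analysis.Analysis"
begin

text \<open>Commutative unital C*-algebra. The carrier type is a commutative unital real Banach
algebra; the complex scalar action sc and the involution st are parameters
satisfying the C*-algebra axioms.\<close>

definition comm_unital_cstar_algebra ::
  "(complex \<Rightarrow> 'a::{real_normed_algebra_1,comm_ring_1,banach} \<Rightarrow> 'a) \<Rightarrow> ('a \<Rightarrow> 'a) \<Rightarrow> bool" where
  "comm_unital_cstar_algebra sc st \<longleftrightarrow>
     (\<forall>a b x. sc (a + b) x = sc a x + sc b x) \<and>
     (\<forall>a x y. sc a (x + y) = sc a x + sc a y) \<and>
     (\<forall>a b x. sc (a * b) x = sc a (sc b x)) \<and>
     (\<forall>x. sc 1 x = x) \<and>
     (\<forall>r x. sc (complex_of_real r) x = scaleR r x) \<and>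
     (\<forall>a x. norm (sc a x) = cmod a * norm x) \<and>
     (\<forall>a x y. sc a (x * y) = sc a x * y) \<and>
     (\<forall>x. st (st x) = x) \<and>
     (\<forall>x y. st (x + y) = st x + st y) \<and>
     (\<forall>a x. st (sc a x) = sc (cnj a) (st x)) \<and>
     (\<forall>x y. st (x * y) = st y * st x) \<and>
     (\<forall>x. norm (st x * x) = (norm x)\<^sup>2)"

definition HA :: "('a::{real_normed_algebra_1,comm_ring_1,banach} \<Rightarrow> 'a) \<Rightarrow> (nat \<Rightarrow> 'a) set" where
  "HA st = {x. summable (\<lambda>k. st (x k) * x k)}"

definition ipA :: "('a::{real_normed_algebra_1,comm_ring_1,banach} \<Rightarrow> 'a) \<Rightarrow> (nat \<Rightarrow> 'a) \<Rightarrow> (nat \<Rightarrow> 'a) \<Rightarrow> 'a" where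
  "ipA st x y = (\<Sum>k. st (x k) * y k)"

definition adjointable_with ::
  "('a::{real_normed_algebra_1,comm_ring_1,banach} \<Rightarrow> 'a) \<Rightarrow> ((nat \<Rightarrow> 'a) \<Rightarrow> (nat \<Rightarrow> 'a))
     \<Rightarrow> ((nat \<Rightarrow> 'a) \<Rightarrow> (nat \<Rightarrow> 'a)) \<Rightarrow> bool" where
  "adjointable_with st F G \<longleftrightarrow>
     F ` HA st \<subseteq> HA st \<and> G ` HA st \<subseteq> HA st \<and>
     (\<forall>x\<in>HA st. \<forall>y\<in>HA st. ipA st (F x) y = ipA st x (G y))"

definition A_linear_op ::
  "('a::{real_normed_algebra_1,comm_ring_1,banach} \<Rightarrow> 'a) \<Rightarrow> ((nat \<Rightarrow> 'a) \<Rightarrow> (nat \<Rightarrow> 'a)) \<Rightarrow> bool" where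
  "A_linear_op st F \<longleftrightarrow>
     (\<forall>x\<in>HA st. \<forall>y\<in>HA st. \<forall>a b.
        F (\<lambda>k. x k * a + y k * b) = (\<lambda>k. F x k * a + F y k * b))"

definition bounded_op ::
  "('a::{real_normed_algebra_1,comm_ring_1,banach} \<Rightarrow> 'a) \<Rightarrow> ((nat \<Rightarrow> 'a) \<Rightarrow> (nat \<Rightarrow> 'a)) \<Rightarrow> bool" where
  "bounded_op st F \<longleftrightarrow>
     (\<exists>C. \<forall>x\<in>HA st. sqrt (norm (ipA st (F x) (F x))) \<le> C * sqrt (norm (ipA st x x)))"

definition scal_op :: "'a::{real_normed_algebra_1,comm_ring_1,banach} \<Rightarrow> (nat \<Rightarrow> 'a) \<Rightarrow> (nat \<Rightarrow> 'a)" where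
  "scal_op \<alpha> x = (\<lambda>k. \<alpha> * x k)"

definition kerA ::
  "('a::{real_normed_algebra_1,comm_ring_1,banach} \<Rightarrow> 'a) \<Rightarrow> ((nat \<Rightarrow> 'a) \<Rightarrow> (nat \<Rightarrow> 'a)) \<Rightarrow> (nat \<Rightarrow> 'a) set" where
  "kerA st T = {x\<in>HA st. T x = (\<lambda>k. 0)}"

definition sigma_pA ::
  "('a::{real_normed_algebra_1,comm_ring_1,banach} \<Rightarrow> 'a) \<Rightarrow> ((nat \<Rightarrow> 'a) \<Rightarrow> (nat \<Rightarrow> 'a)) \<Rightarrow> 'a set" where
  "sigma_pA st F = {\<alpha>. kerA st (\<lambda>x. (\<lambda>k. F x k - scal_op \<alpha> x k)) \<noteq> {(\<lambda>k. 0)}}"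

end

theory Submission
  imports Defs
begin

(* If F x = \<alpha> x with F normal, then <F* x, F* x> = <F x, F x>, and expanding
   <F* x - \<alpha>* x, F* x - \<alpha>* x> shows that it vanishes; as <y, y> = 0 forces y = 0,
   F* x = \<alpha>* x.  Hence \<alpha>2* <x2, x1> = <F x2, x1> = <x2, F* x1> = \<alpha>1* <x2, x1>, and
   invertibility of \<alpha>1 - \<alpha>2 gives <x2, x1> = 0.

   The C*-algebra is only given axiomatically, so positivity is built from scratch through
   accretive elements, those with norm (1 - s x) \<le> 1 + o(s) as s \<rightarrow> 0+.  They are closed
   under sums and limits, and every z* z is accretive.  A self-adjoint x with R \<plusminus> x
   accretive satisfies norm x \<le> e^3 R: averaging (1 + s w x)^N over the N-th roots of
   unity w isolates N^2 s x, and the C*-identity bounds each norm (1 + s w x) by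
   1 + s R + O(s^2).  This gives both that a self-adjoint z with z and -z accretive is 0,
   and the monotonicity norm a \<le> C norm (a + b) that makes H_A closed under addition. *)

section \<open>Accretive elements of a Banach algebra\<close>

lemma eventually_at_right_0_mult_less:
  fixes c e :: real
  assumes "e > 0"
  shows "eventually (\<lambda>s. s * c < e) (at_right 0)"
proof -
  have "((\<lambda>s. s * c) \<longlongrightarrow> 0 * c) (at_right 0)"
    by (intro tendsto_intros)
  then show ?thesis
    using assms by (auto dest: order_tendstoD)
qed

definition accretive :: "'a::real_normed_algebra_1 \<Rightarrow> bool" where
  "accretive x \<longleftrightarrow> (\<forall>e>0. eventually (\<lambda>s. norm (1 - s *\<^sub>R x) \<le> 1 + s * e) (at_right 0))"

lemma accretiveD:
  "accretive x \<Longrightarrow> e > 0 \<Longrightarrow> eventually (\<lambda>s. norm (1 - s *\<^sub>R x) \<le> 1 + s * e) (at_right 0)"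
  unfolding accretive_def by blast

lemma accretive_0: "accretive 0"
  unfolding accretive_def by (auto intro: eventually_mono[OF eventually_at_right_less])

lemma accretive_add:
  assumes "accretive x" "accretive y"
  shows "accretive (x + y)"
  unfolding accretive_def
proof (intro allI impI)
  fix e :: real
  assume "e > 0"
  define K where "K = norm x * norm y"
  have "eventually (\<lambda>s. norm (1 - s *\<^sub>R x) \<le> 1 + s * (e/4)) (at_right 0)"
    "eventually (\<lambda>s. norm (1 - s *\<^sub>R y) \<le> 1 + s * (e/4)) (at_right 0)"
    using accretiveD[OF assms(1), of "e/4"] accretiveD[OF assms(2), of "e/4"] \<open>e > 0\<close>
    by simp_all
  moreover have "eventually (\<lambda>s. s * (e/4) < 1) (at_right 0)"
    "eventually (\<lambda>s. s * K < e/4) (at_right 0)"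
    by (rule eventually_at_right_0_mult_less; use \<open>e > 0\<close> in simp)+
  moreover note eventually_at_right_less
  ultimately show "eventually (\<lambda>s. norm (1 - s *\<^sub>R (x + y)) \<le> 1 + s * e) (at_right 0)"
  proof eventually_elim
    case (elim s)
    have "1 - s *\<^sub>R (x + y) = (1 - s *\<^sub>R x) * (1 - s *\<^sub>R y) - (s * s) *\<^sub>R (x * y)"
      by (simp add: algebra_simps)
    also have "norm \<dots> \<le> (1 + s * (e/4)) * (1 + s * (e/4)) + s * (s * K)"
    proof (rule order_trans[OF norm_triangle_ineq4 add_mono])
      show "norm ((1 - s *\<^sub>R x) * (1 - s *\<^sub>R y)) \<le> (1 + s * (e/4)) * (1 + s * (e/4))"
        using elim \<open>e > 0\<close> by (intro order_trans[OF norm_mult_ineq] mult_mono) auto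
      show "norm ((s * s) *\<^sub>R (x * y)) \<le> s * (s * K)"
        using elim norm_mult_ineq[of x y] by (simp add: K_def mult_left_mono)
    qed
    also have "\<dots> \<le> 1 + s * e"
    proof -
      have "0 \<le> s * (e/4)" "s * (e/4) \<le> 1"
        using elim \<open>e > 0\<close> by simp_all
      then have "(s * (e/4)) * (s * (e/4)) \<le> s * (e/4)"
        by (rule mult_left_le[rotated])
      moreover have "s * (s * K) \<le> s * (e/4)"
        using elim by (intro mult_left_mono) auto
      ultimately show ?thesis
        by (simp add: algebra_simps)
    qed
    finally show ?case .
  qed
qed

lemma accretive_sum: "(\<And>i. i \<in> S \<Longrightarrow> accretive (f i)) \<Longrightarrow> accretive (sum f S)"
  by (induction S rule: infinite_finite_induct) (auto simp: accretive_0 accretive_add)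

lemma closed_accretive: "closed {x::'a::real_normed_algebra_1. accretive x}"
  unfolding closed_sequential_limits
proof (intro allI impI)
  fix f and l :: 'a
  assume "(\<forall>n. f n \<in> {x. accretive x}) \<and> f \<longlonglongrightarrow> l"
  then have acc: "\<And>n. accretive (f n)" and lim: "f \<longlonglongrightarrow> l" by auto
  show "l \<in> {x. accretive x}"
    unfolding mem_Collect_eq accretive_def
  proof (intro allI impI)
    fix e :: real
    assume "e > 0"
    then obtain n where n: "dist (f n) l < e/2"
      using lim by (metis LIMSEQ_iff_nz half_gt_zero order_refl)
    have "eventually (\<lambda>s. norm (1 - s *\<^sub>R f n) \<le> 1 + s * (e/2)) (at_right 0)"
      using accretiveD[OF acc, of "e/2"] \<open>e > 0\<close> by simp
    with eventually_at_right_less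
    show "eventually (\<lambda>s. norm (1 - s *\<^sub>R l) \<le> 1 + s * e) (at_right 0)"
    proof eventually_elim
      case (elim s)
      have "1 - s *\<^sub>R l = (1 - s *\<^sub>R f n) + s *\<^sub>R (f n - l)"
        by (simp add: algebra_simps)
      also have "norm \<dots> \<le> (1 + s * (e/2)) + s * (e/2)"
        using elim n by (intro order_trans[OF norm_triangle_ineq] add_mono)
          (auto simp: dist_norm intro: mult_left_mono)
      finally show ?case by (simp add: algebra_simps)
    qed
  qed
qed

lemma accretive_of_real_diff:
  assumes "norm x \<le> r"
  shows "accretive (of_real r - x)"
  unfolding accretive_def
proof (intro allI impI)
  fix e :: real
  assume "e > 0"
  have "eventually (\<lambda>s. s * r < 1) (at_right 0)"
    by (simp add: eventually_at_right_0_mult_less)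
  with eventually_at_right_less
  show "eventually (\<lambda>s. norm (1 - s *\<^sub>R (of_real r - x)) \<le> 1 + s * e) (at_right 0)"
  proof eventually_elim
    case (elim s)
    have "1 - s *\<^sub>R (of_real r - x) = (1 - s * r) *\<^sub>R 1 + s *\<^sub>R x"
      by (simp add: algebra_simps of_real_def)
    also have "norm \<dots> \<le> (1 - s * r) + s * r"
      using elim assms by (intro order_trans[OF norm_triangle_ineq] add_mono) (auto intro: mult_left_mono)
    finally have "norm (1 - s *\<^sub>R (of_real r - x)) \<le> 1"
      by simp
    moreover have "0 \<le> s * e"
      using elim \<open>e > 0\<close> by simp
    ultimately show ?case
      by linarith
  qed
qed

lemma accretive_of_real_diffD:
  assumes "accretive (of_real r - x)" "r \<ge> 0" "e > 0"
  shows "eventually (\<lambda>s. norm (1 + s *\<^sub>R x) \<le> 1 + s * (r + e)) (at_right 0)"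
  using accretiveD[OF assms(1,3)] eventually_at_right_less
proof eventually_elim
  case (elim s)
  have "1 + s *\<^sub>R x = (1 - s *\<^sub>R (of_real r - x)) + (s * r) *\<^sub>R 1"
    by (simp add: algebra_simps of_real_def)
  also have "norm \<dots> \<le> (1 + s * e) + s * r"
    using elim assms(2) by (intro order_trans[OF norm_triangle_ineq] add_mono) auto
  finally show ?case by (simp add: algebra_simps)
qed

lemma norm_add_scaleR_le:
  fixes u v :: "'a::real_normed_vector"
  assumes "norm (u + v) \<le> b" "norm (u - v) \<le> b" "\<bar>a\<bar> \<le> 1"
  shows "norm (u + a *\<^sub>R v) \<le> b"
proof -
  have "((1 + a) / 2) *\<^sub>R (u + v) + ((1 - a) / 2) *\<^sub>R (u - v)
      = ((1 + a) / 2 + (1 - a) / 2) *\<^sub>R u + ((1 + a) / 2 - (1 - a) / 2) *\<^sub>R v"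
    by (simp only: scaleR_add_right scaleR_diff_right scaleR_add_left scaleR_diff_left)
      (simp add: algebra_simps)
  also have "\<dots> = u + a *\<^sub>R v"
    by (simp flip: add_divide_distrib diff_divide_distrib)
  finally have "u + a *\<^sub>R v = ((1 + a) / 2) *\<^sub>R (u + v) + ((1 - a) / 2) *\<^sub>R (u - v)" ..
  also have "norm \<dots> \<le> ((1 + a) / 2) * b + ((1 - a) / 2) * b"
    using assms by (intro order_trans[OF norm_triangle_ineq] add_mono) (auto intro: mult_left_mono)
  finally show ?thesis
    by (simp add: field_simps)
qed

lemma root_unity_power_eq_1_iff:
  assumes "N > 0"
  shows "exp (2 * pi * \<i> / of_nat N) ^ k = 1 \<longleftrightarrow> N dvd k"
proof -
  have "exp (2 * pi * \<i> / of_nat N) ^ k = exp (complex_of_real (2 * pi * real k / real N) * \<i>)"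
    by (simp add: exp_of_nat_mult[symmetric] field_simps)
  also have "\<dots> = 1 \<longleftrightarrow> (\<exists>n::int. 2 * pi * real k / real N = of_int (2 * n) * pi)"
    by (simp add: exp_eq_1)
  also have "\<dots> \<longleftrightarrow> (\<exists>n::int. int k = n * int N)"
  proof -
    have "2 * pi * real k / real N = of_int (2 * n) * pi \<longleftrightarrow> int k = n * int N" for n :: int
    proof -
      have "2 * pi * real k / real N = of_int (2 * n) * pi \<longleftrightarrow> real k = of_int n * real N"
        using assms by (auto simp: field_simps)
      also have "\<dots> \<longleftrightarrow> int k = n * int N"
        by (metis of_int_eq_iff of_int_mult of_int_of_nat_eq)
      finally show ?thesis .
    qed
    then show ?thesis by simp
  qed
  also have "\<dots> \<longleftrightarrow> N dvd k"
    by (metis dvd_def int_dvd_int_iff mult.commute)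
  finally show ?thesis .
qed

lemma sum_root_unity_powers:
  assumes "N > 0"
  defines "w \<equiv> exp (2 * pi * \<i> / of_nat N)"
  shows "(\<Sum>j<N. (w ^ k) ^ j) = (if N dvd k then of_nat N else 0)"
proof (cases "N dvd k")
  case True
  then have "w ^ k = 1"
    using root_unity_power_eq_1_iff[OF assms(1)] by (simp add: w_def)
  with True show ?thesis
    by simp
next
  case False
  then have "w ^ k \<noteq> 1"
    using root_unity_power_eq_1_iff[OF assms(1)] by (simp add: w_def)
  moreover have "(w ^ k) ^ N = 1"
    using root_unity_power_eq_1_iff[OF assms(1), of N]
    by (simp add: w_def flip: power_mult) (simp add: power_mult mult.commute)
  ultimately show ?thesis
    using False by (simp add: geometric_sum)
qed

lemma dvd_pred_add_iff:
  fixes N m :: nat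
  assumes "N \<ge> 2" "m \<le> N"
  shows "N dvd (N - 1 + m) \<longleftrightarrow> m = 1"
proof
  assume dvd: "N dvd (N - 1 + m)"
  show "m = 1"
  proof (cases "m = 0")
    case True
    then show ?thesis
      using dvd assms nat_dvd_not_less[of "N - 1" N] by simp
  next
    case False
    then have "N dvd (N - 1 + m) - N"
      using dvd by (intro dvd_diff_nat) simp_all
    then have "N dvd m - 1"
      using False assms by (simp add: algebra_simps)
    then show ?thesis
      using False assms nat_dvd_not_less[of "m - 1" N] by linarith
  qed
qed (use assms in simp)

lemma sqrt_square_add_le:
  fixes a b :: real
  assumes "1 \<le> a" "0 \<le> b"
  shows "sqrt (a\<^sup>2 + b) \<le> a + b"
proof (rule real_le_lsqrt)
  have "(a + b)\<^sup>2 = a\<^sup>2 + b + (b * (2 * a - 1) + b * b)"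
    by (simp add: power2_eq_square algebra_simps)
  moreover have "0 \<le> b * (2 * a - 1) + b * b"
    using assms by simp
  ultimately show "a\<^sup>2 + b \<le> (a + b)\<^sup>2"
    by linarith
qed (use assms in simp)

section \<open>Commutative unital C*-algebras\<close>

locale comm_cstar =
  fixes sc :: "complex \<Rightarrow> 'a::{real_normed_algebra_1,comm_ring_1,banach} \<Rightarrow> 'a"
    and st :: "'a \<Rightarrow> 'a"
  assumes cstar: "comm_unital_cstar_algebra sc st"
begin

lemma
  shows st_st [simp]: "st (st x) = x"
    and st_add [simp]: "st (x + y) = st x + st y"
    and st_mult_rev: "st (x * y) = st y * st x"
    and st_sc: "st (sc z x) = sc (cnj z) (st x)"
    and norm_st_mult_self: "norm (st x * x) = (norm x)\<^sup>2"
    and sc_add: "sc (z + w) x = sc z x + sc w x"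
    and sc_mult: "sc (z * w) x = sc z (sc w x)"
    and sc_of_real: "sc (of_real r) x = r *\<^sub>R x"
    and norm_sc: "norm (sc z x) = cmod z * norm x"
    and sc_mult_right: "sc z (x * y) = sc z x * y"
  using cstar unfolding comm_unital_cstar_algebra_def by simp_all

lemma st_mult [simp]: "st (x * y) = st x * st y"
  by (simp add: st_mult_rev mult.commute)

lemma st_0 [simp]: "st 0 = 0"
  using st_add[of 0 0] by simp

lemma st_minus [simp]: "st (- x) = - st x"
  by (metis add_eq_0_iff2 st_add st_0)

lemma st_diff [simp]: "st (x - y) = st x - st y"
  using st_add[of x "- y"] by simp

lemma st_1 [simp]: "st 1 = 1"
  using st_mult[of "st 1" 1] by simp

lemma st_sum: "st (sum f S) = (\<Sum>i\<in>S. st (f i))"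
  by (induction S rule: infinite_finite_induct) auto

lemma norm_st [simp]: "norm (st x) = norm x"
proof -
  have "norm y \<le> norm (st y)" for y
  proof (cases "y = 0")
    case False
    have "(norm y)\<^sup>2 \<le> norm (st y) * norm y"
      using norm_st_mult_self[of y] norm_mult_ineq[of "st y" y] by simp
    with False show ?thesis by (simp add: power2_eq_square)
  qed simp
  from this[of x] this[of "st x"] show ?thesis by simp
qed

definition of_complex :: "complex \<Rightarrow> 'a" where
  "of_complex z = sc z 1"

lemma sc_eq_of_complex_mult: "sc z x = of_complex z * x"
  using sc_mult_right[of z 1 x] by (simp add: of_complex_def)

lemma of_complex_add: "of_complex (z + w) = of_complex z + of_complex w"
  by (simp add: of_complex_def sc_add)

lemma of_complex_mult: "of_complex (z * w) = of_complex z * of_complex w"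
  using sc_mult[of z w 1] by (simp add: sc_eq_of_complex_mult)

lemma of_complex_of_real [simp]: "of_complex (of_real r) = of_real r"
  unfolding of_complex_def sc_of_real by (simp add: of_real_def)

lemma of_complex_0 [simp]: "of_complex 0 = 0"
  using of_complex_of_real[of 0] by simp

lemma of_complex_1 [simp]: "of_complex 1 = 1"
  using of_complex_of_real[of 1] by simp

lemma of_complex_of_nat: "of_complex (of_nat n) = of_nat n"
  using of_complex_of_real[of "of_nat n"] by simp

lemma of_complex_minus: "of_complex (- z) = - of_complex z"
  by (metis add_eq_0_iff2 of_complex_add of_complex_0)

lemma of_complex_power: "of_complex (z ^ n) = of_complex z ^ n"
  by (induction n) (simp_all add: of_complex_mult)

lemma of_complex_sum: "of_complex (sum f S) = (\<Sum>i\<in>S. of_complex (f i))"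
  by (induction S rule: infinite_finite_induct) (simp_all add: of_complex_add)

lemma st_of_complex: "st (of_complex z) = of_complex (cnj z)"
  by (simp add: of_complex_def st_sc)

lemma norm_of_complex: "norm (of_complex z) = cmod z"
  by (simp add: of_complex_def norm_sc)

lemma st_of_real [simp]: "st (of_real r) = of_real r"
  by (metis of_complex_of_real st_of_complex complex_cnj_complex_of_real)

lemma st_scaleR [simp]: "st (r *\<^sub>R x) = r *\<^sub>R st x"
  by (simp add: scaleR_conv_of_real)

lemma bounded_linear_st: "bounded_linear st"
  by (rule bounded_linear_intro[where K=1]) auto

definition imag_unit :: 'a where
  "imag_unit = of_complex \<i>"

lemma imag_unit_mult_self: "imag_unit * imag_unit = - 1"
  unfolding imag_unit_def of_complex_mult[symmetric] by (simp add: of_complex_minus)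

lemma st_imag_unit [simp]: "st imag_unit = - imag_unit"
  by (simp add: imag_unit_def st_of_complex of_complex_minus)

lemma selfadjoint_decomposition:
  obtains h k where "st h = h" "st k = k" "z = h + imag_unit * k"
proof
  show "st ((1/2) *\<^sub>R (z + st z)) = (1/2) *\<^sub>R (z + st z)"
    by (simp add: add.commute)
  show "st ((1/2) *\<^sub>R (- imag_unit * (z - st z))) = (1/2) *\<^sub>R (- imag_unit * (z - st z))"
    by (simp add: algebra_simps)
  have "imag_unit * (- imag_unit * (z - st z)) = z - st z"
    by (simp add: mult.assoc[symmetric] imag_unit_mult_self)
  then have "imag_unit * ((1/2) *\<^sub>R (- imag_unit * (z - st z))) = (1/2) *\<^sub>R (z - st z)"
    by (simp only: mult_scaleR_right)
  moreover have "z = (1/2) *\<^sub>R (z + st z) + (1/2) *\<^sub>R (z - st z)"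
    by (simp add: algebra_simps flip: scaleR_2)
  ultimately show "z = (1/2) *\<^sub>R (z + st z) + imag_unit * ((1/2) *\<^sub>R (- imag_unit * (z - st z)))"
    by simp
qed

lemma st_mult_self_selfadjoint_parts:
  assumes "st h = h" "st k = k"
  shows "st (h + imag_unit * k) * (h + imag_unit * k) = h * h + k * k"
proof -
  have "st (h + imag_unit * k) * (h + imag_unit * k) = h * h - (imag_unit * imag_unit) * (k * k)"
    using assms by (simp add: algebra_simps)
  then show ?thesis by (simp add: imag_unit_mult_self)
qed

lemma norm_selfadjoint_part_le:
  assumes "st h = h" "st k = k"
  shows "norm h \<le> norm (h + imag_unit * k)"
proof -
  let ?v = "h + imag_unit * k"
  have "?v + st ?v = 2 *\<^sub>R h"
    using assms by (simp add: scaleR_2)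
  then have "2 * norm h = norm (?v + st ?v)"
    by simp
  also have "\<dots> \<le> 2 * norm ?v"
    using norm_triangle_ineq[of ?v "st ?v"] unfolding norm_st by linarith
  finally show ?thesis by simp
qed

lemma norm_selfadjoint_parts_le:
  assumes "st h = h" "st k = k"
  shows "(norm (h + imag_unit * k))\<^sup>2 \<le> (norm h)\<^sup>2 + (norm k)\<^sup>2"
proof -
  have "(norm (h + imag_unit * k))\<^sup>2 = norm (h * h + k * k)"
    using norm_st_mult_self st_mult_self_selfadjoint_parts[OF assms] by metis
  also have "\<dots> \<le> norm h * norm h + norm k * norm k"
    by (intro order_trans[OF norm_triangle_ineq] add_mono norm_mult_ineq)
  finally show ?thesis by (simp add: power2_eq_square)
qed

lemma norm_one_minus_square_le:
  assumes "st h = h" "s \<ge> 0"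
  shows "norm (1 - s *\<^sub>R (h * h)) \<le> 1 + s * s * norm h ^ 4"
proof -
  define A where "A = 1 - s *\<^sub>R (h * h)"
  define k where "k = sqrt (2 * s) *\<^sub>R h"
  define v where "v = A + imag_unit * k"
  \<comment> \<open>\<open>A\<close> is the self-adjoint part of \<open>v\<close>, and the cross terms cancel in \<open>st v * v\<close>.\<close>
  have A: "st A = A" and k: "st k = k"
    using assms(1) by (simp_all add: A_def k_def)
  have "k * k = (2 * s) *\<^sub>R (h * h)"
    using assms(2) by (simp add: k_def)
  then have "st v * v = 1 + (s * s) *\<^sub>R (h ^ 4)"
    unfolding v_def st_mult_self_selfadjoint_parts[OF A k]
    by (simp add: A_def scaleR_conv_of_real algebra_simps power4_eq_xxxx)
  then have "(norm v)\<^sup>2 \<le> 1 + s * s * norm h ^ 4"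
    using assms(2) norm_power_ineq[of h 4]
    by (simp add: norm_st_mult_self[symmetric] order_trans[OF norm_triangle_ineq] mult_left_mono)
  also have "\<dots> \<le> (1 + s * s * norm h ^ 4)\<^sup>2"
  proof -
    have "1 + c \<le> (1 + c)\<^sup>2" if "c \<ge> 0" for c :: real
      using that by (simp add: power2_eq_square algebra_simps)
    then show ?thesis by simp
  qed
  finally have "norm v \<le> 1 + s * s * norm h ^ 4"
    by (rule power2_le_imp_le) simp
  then show ?thesis
    using norm_selfadjoint_part_le[OF A k] by (simp add: v_def A_def)
qed

lemma accretive_square:
  assumes "st h = h"
  shows "accretive (h * h)"
  unfolding accretive_def
proof (intro allI impI)
  fix e :: real
  assume "e > 0"
  then have "eventually (\<lambda>s. s * norm h ^ 4 < e) (at_right 0)"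
    by (rule eventually_at_right_0_mult_less)
  with eventually_at_right_less
  show "eventually (\<lambda>s. norm (1 - s *\<^sub>R (h * h)) \<le> 1 + s * e) (at_right 0)"
  proof eventually_elim
    case (elim s)
    have "s * (s * norm h ^ 4) \<le> s * e"
      using elim by (intro mult_left_mono) auto
    moreover have "norm (1 - s *\<^sub>R (h * h)) \<le> 1 + s * (s * norm h ^ 4)"
      using norm_one_minus_square_le[OF assms, of s] elim by (simp add: mult.assoc)
    ultimately show ?case
      by linarith
  qed
qed

lemma accretive_st_mult_self: "accretive (st z * z)"
proof -
  obtain h k where "st h = h" "st k = k" "z = h + imag_unit * k"
    by (rule selfadjoint_decomposition)
  then show ?thesis
    using st_mult_self_selfadjoint_parts accretive_add accretive_square by metis
qed

lemma norm_one_plus_rotated_le: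
  assumes "st x = x" "s \<ge> 0" "norm (1 + s *\<^sub>R x) \<le> b" "norm (1 - s *\<^sub>R x) \<le> b" "cmod l = 1"
  shows "(norm (1 + s *\<^sub>R (of_complex l * x)))\<^sup>2 \<le> b\<^sup>2 + (s * norm x)\<^sup>2"
proof -
  have "\<bar>Re l\<bar> \<le> 1" "\<bar>Im l\<bar> \<le> 1"
    using abs_Re_le_cmod abs_Im_le_cmod assms(5) by metis+
  have "of_complex l = of_complex (of_real (Re l) + \<i> * of_real (Im l))"
    by (rule arg_cong[OF complex_eq])
  then have "of_complex l = of_real (Re l) + imag_unit * of_real (Im l)"
    by (simp add: of_complex_add of_complex_mult imag_unit_def)
  then have "1 + s *\<^sub>R (of_complex l * x) = (1 + (Re l) *\<^sub>R (s *\<^sub>R x)) + imag_unit * ((s * Im l) *\<^sub>R x)"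
    by (simp add: scaleR_conv_of_real algebra_simps)
  also have "(norm \<dots>)\<^sup>2 \<le> (norm (1 + (Re l) *\<^sub>R (s *\<^sub>R x)))\<^sup>2 + (norm ((s * Im l) *\<^sub>R x))\<^sup>2"
    using assms(1) by (intro norm_selfadjoint_parts_le) simp_all
  also have "\<dots> \<le> b\<^sup>2 + (s * norm x)\<^sup>2"
  proof (intro add_mono power_mono)
    show "norm (1 + (Re l) *\<^sub>R (s *\<^sub>R x)) \<le> b"
      using assms(3,4) \<open>\<bar>Re l\<bar> \<le> 1\<close> by (rule norm_add_scaleR_le)
    have "\<bar>Im l\<bar> * (s * norm x) \<le> 1 * (s * norm x)"
      using assms(2) \<open>\<bar>Im l\<bar> \<le> 1\<close> by (intro mult_right_mono) simp_all
    then show "norm ((s * Im l) *\<^sub>R x) \<le> s * norm x"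
      using assms(2) by (simp add: abs_mult mult_ac)
  qed simp_all
  finally show ?thesis .
qed


lemma rotated_binomial_expansion:
  "of_complex (w ^ (j * k)) * (1 + s *\<^sub>R (of_complex (w ^ j) * x)) ^ N
    = (\<Sum>m\<le>N. of_complex ((w ^ (k + m)) ^ j) * ((real (N choose m) * s ^ m) *\<^sub>R x ^ m))"
proof -
  define c where "c m = (real (N choose m) * s ^ m) *\<^sub>R x ^ m" for m
  have "(1 + s *\<^sub>R (of_complex (w ^ j) * x)) ^ N
      = (\<Sum>m\<le>N. of_nat (N choose m) * (s *\<^sub>R (of_complex (w ^ j) * x)) ^ m)"
    using binomial_ring[of "s *\<^sub>R (of_complex (w ^ j) * x)" 1 N] by (simp add: add.commute)
  also have "\<dots> = (\<Sum>m\<le>N. of_complex (w ^ (j * m)) * c m)"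
    by (simp add: c_def power_mult_distrib scaleR_conv_of_real mult_ac
        flip: of_complex_power power_mult)
  finally have "of_complex (w ^ (j * k)) * (1 + s *\<^sub>R (of_complex (w ^ j) * x)) ^ N
      = (\<Sum>m\<le>N. of_complex (w ^ (j * k) * w ^ (j * m)) * c m)"
    by (simp add: sum_distrib_left of_complex_mult mult.assoc)
  also have "\<dots> = (\<Sum>m\<le>N. of_complex ((w ^ (k + m)) ^ j) * c m)"
    by (simp only: power_mult[symmetric] power_add[symmetric]) (simp add: algebra_simps)
  finally show ?thesis
    by (simp add: c_def)
qed

lemma roots_of_unity_filter:
  fixes N :: nat
  assumes "N \<ge> 2"
  defines "w \<equiv> exp (2 * pi * \<i> / of_nat N)"
  shows "(\<Sum>j<N. of_complex (w ^ (j * (N - 1))) * (1 + s *\<^sub>R (of_complex (w ^ j) * x)) ^ N)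
    = (real N * real N * s) *\<^sub>R x"
proof -
  define c where "c m = (real (N choose m) * s ^ m) *\<^sub>R x ^ m" for m
  have "(\<Sum>j<N. of_complex (w ^ (j * (N - 1))) * (1 + s *\<^sub>R (of_complex (w ^ j) * x)) ^ N)
      = (\<Sum>j<N. \<Sum>m\<le>N. of_complex ((w ^ (N - 1 + m)) ^ j) * c m)"
    unfolding c_def by (rule sum.cong) (simp_all only: rotated_binomial_expansion)
  also have "\<dots> = (\<Sum>m\<le>N. \<Sum>j<N. of_complex ((w ^ (N - 1 + m)) ^ j) * c m)"
    by (rule sum.swap)
  also have "\<dots> = (\<Sum>m\<le>N. of_complex (\<Sum>j<N. (w ^ (N - 1 + m)) ^ j) * c m)"
    by (simp add: of_complex_sum sum_distrib_right)
  also have "\<dots> = (\<Sum>m\<le>N. if m = 1 then of_nat N * c 1 else 0)"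
  proof (rule sum.cong)
    fix m
    assume "m \<in> {..N}"
    then have "(\<Sum>j<N. (w ^ (N - 1 + m)) ^ j) = (if m = 1 then of_nat N else 0)"
      using sum_root_unity_powers[of N "N - 1 + m"] dvd_pred_add_iff[OF assms(1), of m] assms(1)
      by (simp add: w_def)
    then show "of_complex (\<Sum>j<N. (w ^ (N - 1 + m)) ^ j) * c m = (if m = 1 then of_nat N * c 1 else 0)"
      by (simp add: of_complex_of_nat)
  qed simp
  also have "\<dots> = (real N * real N * s) *\<^sub>R x"
    using assms(1) by (simp add: c_def scaleR_conv_of_real)
  finally show ?thesis .
qed

lemma selfadjoint_norm_le_power:
  assumes "st x = x" "N \<ge> 2" "s \<ge> 0" "norm (1 + s *\<^sub>R x) \<le> b" "norm (1 - s *\<^sub>R x) \<le> b"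
  shows "real N * s * norm x \<le> sqrt (b\<^sup>2 + (s * norm x)\<^sup>2) ^ N"
proof -
  define w where "w = exp (2 * pi * \<i> / of_nat N)"
  define K where "K = sqrt (b\<^sup>2 + (s * norm x)\<^sup>2)"
  have "cmod (w ^ j) = 1" for j
    by (simp add: w_def norm_power)
  then have term_le: "norm (of_complex (w ^ (j * (N - 1))) * (1 + s *\<^sub>R (of_complex (w ^ j) * x)) ^ N) \<le> K ^ N"
    for j
  proof -
    have "norm (1 + s *\<^sub>R (of_complex (w ^ j) * x)) \<le> K"
      unfolding K_def using assms
      by (intro real_le_rsqrt norm_one_plus_rotated_le) (auto simp: \<open>cmod (w ^ j) = 1\<close>)
    then have "norm ((1 + s *\<^sub>R (of_complex (w ^ j) * x)) ^ N) \<le> K ^ N"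
      by (intro order_trans[OF norm_power_ineq] power_mono) simp_all
    then show ?thesis
      by (intro order_trans[OF norm_mult_ineq]) (simp add: norm_of_complex \<open>\<And>j. cmod (w ^ j) = 1\<close>)
  qed
  have "real N * (real N * s * norm x) = norm ((real N * real N * s) *\<^sub>R x)"
    using assms(3) by simp
  also have "\<dots> \<le> (\<Sum>j<N. norm (of_complex (w ^ (j * (N - 1))) * (1 + s *\<^sub>R (of_complex (w ^ j) * x)) ^ N))"
    unfolding w_def roots_of_unity_filter[OF assms(2), symmetric] by (rule norm_sum)
  also have "\<dots> \<le> (\<Sum>j<N. K ^ N)"
    by (rule sum_mono) (rule term_le)
  finally have "real N * (real N * s * norm x) \<le> real N * K ^ N"
    by simp
  then show ?thesis
    using assms(2) by (simp add: K_def)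
qed


lemma selfadjoint_norm_le_exp_of_bounds:
  assumes "st x = x" "R \<ge> 0" "t > 0" "n \<ge> 2" "(t * norm x)\<^sup>2 \<le> real n"
    and "norm (1 + (t / real n) *\<^sub>R x) \<le> 1 + (t / real n) * R"
    and "norm (1 - (t / real n) *\<^sub>R x) \<le> 1 + (t / real n) * R"
  shows "t * norm x \<le> exp (t * R + 1)"
proof -
  define s where "s = t / real n"
  have "s > 0" "t * R \<ge> 0"
    using assms(2-4) by (simp_all add: s_def)
  have "t * norm x = real n * s * norm x"
    using assms(4) by (simp add: s_def)
  also have "\<dots> \<le> sqrt ((1 + s * R)\<^sup>2 + (s * norm x)\<^sup>2) ^ n"
    using assms \<open>s > 0\<close> by (intro selfadjoint_norm_le_power) (simp_all add: s_def)
  also have "\<dots> \<le> (1 + (t * R + 1) / real n) ^ n"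
  proof (rule power_mono)
    have "(s * norm x)\<^sup>2 = (t * norm x)\<^sup>2 / (real n * real n)"
      by (simp add: s_def power_divide power_mult_distrib power2_eq_square)
    also have "\<dots> \<le> real n / (real n * real n)"
      using assms(5) by (intro divide_right_mono) simp_all
    also have "\<dots> = 1 / real n"
      using assms(4) by simp
    finally have "(s * norm x)\<^sup>2 \<le> 1 / real n" .
    moreover have "sqrt ((1 + s * R)\<^sup>2 + (s * norm x)\<^sup>2) \<le> (1 + s * R) + (s * norm x)\<^sup>2"
      using \<open>s > 0\<close> assms(2) by (intro sqrt_square_add_le) simp_all
    ultimately show "sqrt ((1 + s * R)\<^sup>2 + (s * norm x)\<^sup>2) \<le> 1 + (t * R + 1) / real n"
      by (simp add: s_def add_divide_distrib)
  qed simp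
  also have "\<dots> \<le> exp (t * R + 1)"
    using assms(4) \<open>t * R \<ge> 0\<close> by (intro exp_ge_one_plus_x_over_n_power_n) simp_all
  finally show ?thesis .
qed

lemma selfadjoint_norm_le_exp:
  assumes "st x = x" "R \<ge> 0" "accretive (of_real R - x)" "accretive (of_real R + x)" "t > 0"
  shows "t * norm x \<le> exp (t * R + 2)"
proof -
  define R' where "R' = R + 1 / t"
  have plus: "eventually (\<lambda>s. norm (1 + s *\<^sub>R x) \<le> 1 + s * R') (at_right 0)"
    using accretive_of_real_diffD[OF assms(3,2), of "1 / t"] assms(5) by (simp add: R'_def)
  have "accretive (of_real R - (- x))"
    using assms(4) by simp
  then have minus: "eventually (\<lambda>s. norm (1 - s *\<^sub>R x) \<le> 1 + s * R') (at_right 0)"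
    using accretive_of_real_diffD[OF _ assms(2), of "- x" "1 / t"] assms(5) by (simp add: R'_def)
  have lim: "filterlim (\<lambda>n. t / real n) (at_right 0) sequentially"
  proof (rule tendsto_imp_filterlim_at_right)
    show "(\<lambda>n. t / real n) \<longlonglongrightarrow> 0"
      by (rule lim_const_over_n)
    show "eventually (\<lambda>n. 0 < t / real n) sequentially"
      using eventually_gt_at_top[of 0] by eventually_elim (simp add: assms(5))
  qed
  have "eventually (\<lambda>n. 2 \<le> n \<and> (t * norm x)\<^sup>2 \<le> real n
      \<and> norm (1 + (t / real n) *\<^sub>R x) \<le> 1 + (t / real n) * R'
      \<and> norm (1 - (t / real n) *\<^sub>R x) \<le> 1 + (t / real n) * R') sequentially"
    by (intro eventually_conj eventually_ge_at_top eventually_compose_filterlim[OF plus lim]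
        eventually_compose_filterlim[OF minus lim]
        filterlim_real_sequentially[unfolded filterlim_at_top, rule_format])
  then obtain n where "2 \<le> n" "(t * norm x)\<^sup>2 \<le> real n"
    "norm (1 + (t / real n) *\<^sub>R x) \<le> 1 + (t / real n) * R'"
    "norm (1 - (t / real n) *\<^sub>R x) \<le> 1 + (t / real n) * R'"
    using eventually_happens'[OF sequentially_bot] by blast
  then have "t * norm x \<le> exp (t * R' + 1)"
    using assms by (intro selfadjoint_norm_le_exp_of_bounds) (simp_all add: R'_def)
  also have "t * R' + 1 = t * R + 2"
    using assms(5) by (simp add: R'_def field_simps)
  finally show ?thesis .
qed

lemma selfadjoint_norm_le:
  assumes "st x = x" "R \<ge> 0" "accretive (of_real R - x)" "accretive (of_real R + x)"
  shows "norm x \<le> exp 3 * R"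
proof (cases "R = 0")
  case True
  show ?thesis
  proof (rule ccontr)
    assume "\<not> ?thesis"
    then have "norm x > 0"
      using True by simp
    then have "((exp 2 + 1) / norm x) * norm x \<le> exp 2"
      using selfadjoint_norm_le_exp[OF assms, of "(exp 2 + 1) / norm x"] True by (simp add: add_pos_pos)
    with \<open>norm x > 0\<close> show False
      by simp
  qed
next
  case False
  with assms(2) have "R > 0"
    by simp
  then have "(1 / R) * norm x \<le> exp 3"
    using selfadjoint_norm_le_exp[OF assms, of "1 / R"] by simp
  with \<open>R > 0\<close> show ?thesis
    by (simp add: field_simps)
qed

lemma accretive_antisym:
  assumes "st a = a" "accretive a" "accretive (- a)"
  shows "a = 0"
  using selfadjoint_norm_le[of a 0] assms by simp

lemma norm_le_norm_add_accretive:
  assumes "st a = a" "accretive a" "accretive b"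
  shows "norm a \<le> (exp 3 + 1) / 2 * norm (a + b)"
proof -
  define M where "M = norm (a + b)"
  define x where "x = a - of_real (M / 2)"
  have "of_real (M / 2) - x = b + (of_real M - (a + b))"
    by (simp add: x_def algebra_simps flip: of_real_add)
  then have "accretive (of_real (M / 2) - x)"
    using accretive_add[OF assms(3) accretive_of_real_diff[of "a + b" M]] by (simp add: M_def)
  moreover have "accretive (of_real (M / 2) + x)"
    using assms(2) by (simp add: x_def)
  ultimately have "norm x \<le> exp 3 * (M / 2)"
    using assms(1) by (intro selfadjoint_norm_le) (simp_all add: x_def M_def)
  moreover have "norm a \<le> norm x + M / 2"
    using norm_triangle_ineq[of x "of_real (M / 2)"] by (simp add: x_def M_def)
  ultimately show ?thesis
    by (simp add: M_def field_simps)
qed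


section \<open>The standard Hilbert module\<close>

lemma HA_mult_left:
  assumes "x \<in> HA st"
  shows "(\<lambda>k. c * x k) \<in> HA st"
proof -
  have "summable (\<lambda>k. (st c * c) * (st (x k) * x k))"
    using assms unfolding HA_def by (intro summable_mult) simp
  then show ?thesis
    unfolding HA_def by (simp add: algebra_simps)
qed

lemma HA_add:
  assumes "x \<in> HA st" "y \<in> HA st"
  shows "(\<lambda>k. x k + y k) \<in> HA st"
  unfolding HA_def mem_Collect_eq summable_Cauchy
proof (intro allI impI)
  fix e :: real
  assume "e > 0"
  define C :: real where "C = (exp 3 + 1) / 2"
  have "C > 0"
    by (simp add: C_def add_pos_pos)
  define e' where "e' = e / (4 * C)"
  have "e' > 0"
    using \<open>e > 0\<close> \<open>C > 0\<close> by (simp add: e'_def)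
  obtain N1 where N1: "\<And>m n. m \<ge> N1 \<Longrightarrow> norm (\<Sum>k\<in>{m..<n}. st (x k) * x k) < e'"
    using assms(1) \<open>e' > 0\<close> unfolding HA_def summable_Cauchy by blast
  obtain N2 where N2: "\<And>m n. m \<ge> N2 \<Longrightarrow> norm (\<Sum>k\<in>{m..<n}. st (y k) * y k) < e'"
    using assms(2) \<open>e' > 0\<close> unfolding HA_def summable_Cauchy by blast
  show "\<exists>N. \<forall>m\<ge>N. \<forall>n. norm (\<Sum>k\<in>{m..<n}. st (x k + y k) * (x k + y k)) < e"
  proof (intro exI allI impI)
    fix m n
    assume "max N1 N2 \<le> m"
    define P where "P = (\<Sum>k\<in>{m..<n}. st (x k + y k) * (x k + y k))"
    define Q where "Q = (\<Sum>k\<in>{m..<n}. st (x k - y k) * (x k - y k))"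
    have "P + Q = 2 *\<^sub>R ((\<Sum>k\<in>{m..<n}. st (x k) * x k) + (\<Sum>k\<in>{m..<n}. st (y k) * y k))"
      unfolding P_def Q_def by (simp add: scaleR_2 algebra_simps flip: sum.distrib)
    moreover have "st P = P"
      unfolding P_def by (simp add: st_sum mult.commute)
    moreover have "accretive P" "accretive Q"
      unfolding P_def Q_def by (intro accretive_sum accretive_st_mult_self)+
    ultimately have "norm P \<le> C * (2 * norm ((\<Sum>k\<in>{m..<n}. st (x k) * x k) + (\<Sum>k\<in>{m..<n}. st (y k) * y k)))"
      using norm_le_norm_add_accretive[of P Q] by (simp add: C_def)
    also have "\<dots> < C * (2 * (e' + e'))"
      using N1[of m n] N2[of m n] \<open>max N1 N2 \<le> m\<close> \<open>C > 0\<close>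
      by (intro mult_strict_left_mono order_le_less_trans[OF norm_triangle_ineq]) auto
    also have "\<dots> = e"
      using \<open>C > 0\<close> by (simp add: e'_def)
    finally show "norm (\<Sum>k\<in>{m..<n}. st (x k + y k) * (x k + y k)) < e"
      by (simp add: P_def)
  qed
qed

lemma polarization_identity:
  "4 *\<^sub>R (st u * v) = (st (u + v) * (u + v) - st (u - v) * (u - v))
    - imag_unit * (st (u + imag_unit * v) * (u + imag_unit * v) - st (u - imag_unit * v) * (u - imag_unit * v))"
proof -
  have i2: "imag_unit * (imag_unit * z) = - z" for z
    by (simp add: mult.assoc[symmetric] imag_unit_mult_self)
  show ?thesis
    by (simp add: algebra_simps scaleR_conv_of_real i2)
qed

lemma summable_ipA:
  assumes "x \<in> HA st" "y \<in> HA st"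
  shows "summable (\<lambda>k. st (x k) * y k)"
proof -
  define P where "P c k = st (x k + c * y k) * (x k + c * y k)" for c k
  have "summable (P c)" for c
    using HA_add[OF assms(1) HA_mult_left[OF assms(2)]] unfolding HA_def P_def by simp
  then have "summable (\<lambda>k. (1/4) *\<^sub>R ((P 1 k - P (- 1) k) - imag_unit * (P imag_unit k - P (- imag_unit) k)))"
    by (intro summable_scaleR_right summable_diff summable_mult)
  moreover have "st (x k) * y k = (1/4) *\<^sub>R ((P 1 k - P (- 1) k) - imag_unit * (P imag_unit k - P (- imag_unit) k))"
    for k
  proof -
    have "st (x k) * y k = (1/4) *\<^sub>R (4 *\<^sub>R (st (x k) * y k))"
      by simp
    then show ?thesis
      unfolding polarization_identity by (simp add: P_def)
  qed
  ultimately show ?thesis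
    by simp
qed

lemma sums_ipA:
  assumes "x \<in> HA st" "y \<in> HA st"
  shows "(\<lambda>k. st (x k) * y k) sums ipA st x y"
  unfolding ipA_def using summable_ipA[OF assms] by (rule summable_sums)

lemma st_ipA:
  assumes "x \<in> HA st" "y \<in> HA st"
  shows "st (ipA st x y) = ipA st y x"
proof -
  have "(\<lambda>k. st (st (x k) * y k)) sums st (ipA st x y)"
    by (rule bounded_linear.sums[OF bounded_linear_st sums_ipA[OF assms]])
  then have "(\<lambda>k. st (y k) * x k) sums st (ipA st x y)"
    by (simp add: mult.commute)
  with sums_ipA[OF assms(2,1)] show ?thesis
    using sums_unique2 by blast
qed

lemma ipA_mult_left:
  assumes "x \<in> HA st" "y \<in> HA st"
  shows "ipA st (\<lambda>k. c * x k) y = st c * ipA st x y"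
  using sums_mult[OF sums_ipA[OF assms], of "st c"] unfolding ipA_def
  by (simp add: sums_iff mult.assoc)

lemma ipA_mult_right:
  assumes "x \<in> HA st" "y \<in> HA st"
  shows "ipA st x (\<lambda>k. c * y k) = c * ipA st x y"
  using sums_mult[OF sums_ipA[OF assms], of c] unfolding ipA_def
  by (simp add: sums_iff mult.left_commute)

lemma sums_st_mult_self_diff:
  assumes "u \<in> HA st" "v \<in> HA st"
  shows "(\<lambda>k. st (u k - c * v k) * (u k - c * v k))
    sums (ipA st u u - c * ipA st u v - st c * ipA st v u + st c * c * ipA st v v)"
proof -
  have "(\<lambda>k. st (u k) * u k - c * (st (u k) * v k) - st c * (st (v k) * u k) + st c * c * (st (v k) * v k))
      sums (ipA st u u - c * ipA st u v - st c * ipA st v u + st c * c * ipA st v v)"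
    using assms by (intro sums_add sums_diff sums_mult sums_ipA)
  then show ?thesis
    by (simp add: algebra_simps)
qed

lemma sums_st_mult_self_0_imp_0:
  assumes "(\<lambda>k. st (y k) * y k) sums 0"
  shows "y j = 0"
proof -
  define p where "p k = st (y k) * y k" for k
  have "(\<lambda>n. (\<Sum>k<n. p k) - p j) \<longlonglongrightarrow> 0 - p j"
    using assms unfolding sums_def p_def by (intro tendsto_diff tendsto_const)
  moreover have "eventually (\<lambda>n. (\<Sum>k<n. p k) - p j \<in> {x. accretive x}) sequentially"
  proof (rule eventually_sequentiallyI[of "Suc j"])
    fix n
    assume "Suc j \<le> n"
    then have "(\<Sum>k<n. p k) - p j = (\<Sum>k\<in>{..<n} - {j}. p k)"
      by (simp add: sum_diff1)
    then show "(\<Sum>k<n. p k) - p j \<in> {x. accretive x}"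
      unfolding p_def by (auto intro: accretive_sum accretive_st_mult_self)
  qed
  ultimately have "accretive (- p j)"
    using Lim_in_closed_set[OF closed_accretive] by fastforce
  then have "p j = 0"
    using accretive_antisym[of "p j"] accretive_st_mult_self by (simp add: p_def mult.commute)
  then show ?thesis
    using norm_st_mult_self[of "y j"] by (simp add: p_def)
qed


lemma ipA_normal_adjoint_self:
  assumes adj: "adjointable_with st F G" and normal: "\<forall>x\<in>HA st. F (G x) = G (F x)"
    and x: "x \<in> HA st"
  shows "ipA st (G x) (G x) = ipA st (F x) (F x)"
proof -
  have F: "\<And>u. u \<in> HA st \<Longrightarrow> F u \<in> HA st" and G: "\<And>u. u \<in> HA st \<Longrightarrow> G u \<in> HA st"
    and adjoint: "\<And>u v. u \<in> HA st \<Longrightarrow> v \<in> HA st \<Longrightarrow> ipA st (F u) v = ipA st u (G v)"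
    using adj unfolding adjointable_with_def by blast+
  have "ipA st (G x) (G x) = ipA st (F (G x)) x"
    using adjoint[OF G[OF x] x] by simp
  also have "\<dots> = ipA st (G (F x)) x"
    using normal x by simp
  also have "\<dots> = st (ipA st x (G (F x)))"
    using st_ipA[OF x G[OF F[OF x]]] by simp
  also have "\<dots> = st (ipA st (F x) (F x))"
    using adjoint[OF x F[OF x]] by simp
  also have "\<dots> = ipA st (F x) (F x)"
    using st_ipA[OF F[OF x] F[OF x]] by simp
  finally show ?thesis .
qed

lemma eigenvector_adjoint:
  assumes adj: "adjointable_with st F G" and normal: "\<forall>x\<in>HA st. F (G x) = G (F x)"
    and x: "x \<in> HA st" and eigen: "F x = (\<lambda>k. \<alpha> * x k)"
  shows "G x = (\<lambda>k. st \<alpha> * x k)"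
proof -
  have g: "G x \<in> HA st"
    using adj x unfolding adjointable_with_def by blast
  define X where "X = ipA st x x"
  have "st X = X"
    unfolding X_def using st_ipA[OF x x] .
  have xg: "ipA st x (G x) = st \<alpha> * X"
    using adj x eigen ipA_mult_left[OF x x] unfolding adjointable_with_def X_def by metis
  have gx: "ipA st (G x) x = \<alpha> * X"
    using st_ipA[OF x g] \<open>st X = X\<close> by (simp add: xg)
  have gg: "ipA st (G x) (G x) = st \<alpha> * \<alpha> * X"
    unfolding ipA_normal_adjoint_self[OF adj normal x] eigen X_def
    using ipA_mult_left[OF x HA_mult_left[OF x]] ipA_mult_right[OF x x] by (simp add: mult.assoc)
  have "(\<lambda>k. st (G x k - st \<alpha> * x k) * (G x k - st \<alpha> * x k)) sums 0"
    using sums_st_mult_self_diff[OF g x, of "st \<alpha>"] by (simp add: gg gx xg X_def[symmetric] algebra_simps)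
  then show ?thesis
    using sums_st_mult_self_0_imp_0 by fastforce
qed

end

lemma kerA_shift_eq: "kerA st (\<lambda>x k. F x k - scal_op \<alpha> x k) = {x \<in> HA st. F x = (\<lambda>k. \<alpha> * x k)}"
  unfolding kerA_def scal_op_def by (auto simp: fun_eq_iff)

theorem lemma2p21:
  fixes sc :: "complex \<Rightarrow> 'a::{real_normed_algebra_1,comm_ring_1,banach} \<Rightarrow> 'a"
    and st :: "'a \<Rightarrow> 'a"
    and F Fstar :: "(nat \<Rightarrow> 'a) \<Rightarrow> (nat \<Rightarrow> 'a)"
    and \<alpha>1 \<alpha>2 :: 'a
  assumes "comm_unital_cstar_algebra sc st"
    and "A_linear_op st F" and "bounded_op st F" and "adjointable_with st F Fstar"
    and normal: "\<forall>x\<in>HA st. F (Fstar x) = Fstar (F x)"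
    and "\<alpha>1 \<in> sigma_pA st F" and "\<alpha>2 \<in> sigma_pA st F"
    and "\<exists>b. (\<alpha>1 - \<alpha>2) * b = 1 \<and> b * (\<alpha>1 - \<alpha>2) = 1"
  shows "\<forall>x1\<in>kerA st (\<lambda>x. (\<lambda>k. F x k - scal_op \<alpha>1 x k)). \<forall>x2\<in>kerA st (\<lambda>x. (\<lambda>k. F x k - scal_op \<alpha>2 x k)).
           ipA st x2 x1 = 0"
  unfolding kerA_shift_eq
proof (intro ballI, elim CollectE conjE)
  interpret comm_cstar sc st
    by (rule comm_cstar.intro) fact
  fix x1 x2
  assume x1: "x1 \<in> HA st" "F x1 = (\<lambda>k. \<alpha>1 * x1 k)" and x2: "x2 \<in> HA st" "F x2 = (\<lambda>k. \<alpha>2 * x2 k)"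
  have "st \<alpha>2 * ipA st x2 x1 = ipA st (F x2) x1"
    using ipA_mult_left[OF x2(1) x1(1)] x2(2) by simp
  also have "\<dots> = ipA st x2 (Fstar x1)"
    using assms(4) x1(1) x2(1) unfolding adjointable_with_def by blast
  also have "\<dots> = st \<alpha>1 * ipA st x2 x1"
    using eigenvector_adjoint[OF assms(4) normal x1] ipA_mult_right[OF x2(1) x1(1)] by simp
  finally have "st (\<alpha>1 - \<alpha>2) * ipA st x2 x1 = 0"
    by (simp add: algebra_simps)
  moreover obtain b where "st b * st (\<alpha>1 - \<alpha>2) = 1"
    using assms(8) st_mult st_1 by metis
  ultimately show "ipA st x2 x1 = 0"
    by (metis mult.assoc mult_1 mult_zero_right)
qed

end
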